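(* Let $g: X_1\times\cdots\times X_n\to A$ be an $n$-person game form, let $i\in[n]$, let $j\neq k$ be two elements of $X_i$, and let $y^1,y^2,y^3,y^4\in X_{-i}$ (not necessarily pairwise distinct) be such that (1) $g(j,y^1)\neq g(j,y^2)$; (2) $g(k,y^3)\neq g(k,y^4)$; (3) $g(j,y^t)\neq g(k,y^t)$ for all $t=1,2,3,4$. Then $g$ is not weakly totally tight.
   Context: Let $X_1,\dots,X_n$ and $A$ be finite nonempty sets. An $n$-person game form is a map $g: X_1\times\cdots\times X_n\to A$; elements $x=(x_1,\dots,x_n)$ of $X=X_1\times\cdots\times X_n$ are strategy profiles, elements of $A$ are outcomes. For a direction (player) $i\in[n]$ write $X_{-i}=\prod_{t\neq i}X_t$, and for $s\in X_i$, $y\in X_{-i}$ write $(s,y)$ for the profile whose $i$-th coordinate is $s$ and whose other coordinates are given by $y$. The game form $g$ is weakly totally tight (WTT) if for every $i\in[n]$, all $s\neq s'$ in $X_i$ and all $y\neq y'$ in $X_{-i}$, at least one of the equalities $g(s,y)=g(s,y')$, $g(s,y)=g(s',y)$, $g(s',y')=g(s',y)$, $g(s',y')=g(s,y')$ holds. *)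

theory Defs
  imports "HOL-Library.FuncSet"
begin

text \<open>Players are indexed by {..<n} (i.e. [n] shifted to 0..n-1). A strategy profile is
an extensional function in PiE {..<n} X. A game form is g with g mapping profiles into A.\<close>

definition game_form :: "nat \<Rightarrow> (nat \<Rightarrow> 's set) \<Rightarrow> 'o set \<Rightarrow> ((nat \<Rightarrow> 's) \<Rightarrow> 'o) \<Rightarrow> bool" where
  "game_form n X A g \<longleftrightarrow>
     (\<forall>i<n. finite (X i) \<and> X i \<noteq> {}) \<and> finite A \<and> A \<noteq> {} \<and>
     (\<forall>x \<in> PiE {..<n} X. g x \<in> A)"

definition others :: "nat \<Rightarrow> (nat \<Rightarrow> 's set) \<Rightarrow> nat \<Rightarrow> (nat \<Rightarrow> 's) set" where
  "others n X i = PiE ({..<n} - {i}) X"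

definition join :: "nat \<Rightarrow> 's \<Rightarrow> (nat \<Rightarrow> 's) \<Rightarrow> (nat \<Rightarrow> 's)" where
  "join i s y = y(i := s)"

definition WTT :: "nat \<Rightarrow> (nat \<Rightarrow> 's set) \<Rightarrow> ((nat \<Rightarrow> 's) \<Rightarrow> 'o) \<Rightarrow> bool" where
  "WTT n X g \<longleftrightarrow>
     (\<forall>i<n. \<forall>s\<in>X i. \<forall>s'\<in>X i. \<forall>y\<in>others n X i. \<forall>y'\<in>others n X i.
        s \<noteq> s' \<longrightarrow> y \<noteq> y' \<longrightarrow>
        g (join i s y) = g (join i s y') \<or> g (join i s y) = g (join i s' y) \<or>
        g (join i s' y') = g (join i s' y) \<or> g (join i s' y') = g (join i s y'))"

end

theory Submission
  imports Defs
begin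

text \<open>Under weak total tightness, any two columns y, y' of X_{-i} on which the rows j and k of
player i disagree must be joined by row j or by row k. Applied to the pairs among y1, ..., y4,
this forces g(k, y1) = g(k, y2) and g(j, y3) = g(j, y4); since row j separates y1 from y2, it
separates y3 from one of them, say y1, so row k joins y1 with both y3 and y4, contradicting
g(k, y3) \<noteq> g(k, y4).\<close>

lemma WTT_row_agreement:
  assumes "WTT n X g" and "i < n" and "j \<in> X i" and "k \<in> X i" and "j \<noteq> k"
    and "y \<in> others n X i" and "y' \<in> others n X i"
    and "g (join i j y) \<noteq> g (join i k y)" and "g (join i j y') \<noteq> g (join i k y')"
  shows "g (join i j y) = g (join i j y') \<or> g (join i k y) = g (join i k y')"
proof (cases "y = y'")
  case False
  with assms(1-7) have "g (join i j y) = g (join i j y') \<or> g (join i j y) = g (join i k y) \<or>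
      g (join i k y') = g (join i k y) \<or> g (join i k y') = g (join i j y')"
    unfolding WTT_def by blast
  with assms(8,9) show ?thesis by auto
qed simp

lemma two_rows_four_columns_contradiction:
  fixes a b :: "'c \<Rightarrow> 'o"
  assumes agree: "\<And>y y'. y \<in> {y1, y2, y3, y4} \<Longrightarrow> y' \<in> {y1, y2, y3, y4} \<Longrightarrow>
      a y = a y' \<or> b y = b y'"
    and "a y1 \<noteq> a y2" and "b y3 \<noteq> b y4"
  shows False
proof -
  have b12: "b y1 = b y2" and a34: "a y3 = a y4"
    using agree[of y1 y2] agree[of y3 y4] assms(2,3) by auto
  consider "a y1 \<noteq> a y3" | "a y2 \<noteq> a y3"
    using assms(2) by metis
  then show False
  proof cases
    case 1
    then have "b y1 = b y3" and "b y1 = b y4"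
      using agree[of y1 y3] agree[of y1 y4] a34 by auto
    with assms(3) show False by simp
  next
    case 2
    then have "b y2 = b y3" and "b y2 = b y4"
      using agree[of y2 y3] agree[of y2 y4] a34 by auto
    with assms(3) show False by simp
  qed
qed

theorem mainTheorem1:
  fixes n :: nat and X :: "nat \<Rightarrow> 's set" and A :: "'o set" and g :: "(nat \<Rightarrow> 's) \<Rightarrow> 'o"
  assumes "game_form n X A g"
    and "i < n" and "j \<in> X i" and "k \<in> X i" and "j \<noteq> k"
    and "y1 \<in> others n X i" and "y2 \<in> others n X i"
    and "y3 \<in> others n X i" and "y4 \<in> others n X i"
    and "g (join i j y1) \<noteq> g (join i j y2)"
    and "g (join i k y3) \<noteq> g (join i k y4)"
    and "g (join i j y1) \<noteq> g (join i k y1)"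
    and "g (join i j y2) \<noteq> g (join i k y2)"
    and "g (join i j y3) \<noteq> g (join i k y3)"
    and "g (join i j y4) \<noteq> g (join i k y4)"
  shows "\<not> WTT n X g"
proof
  assume wtt: "WTT n X g"
  have "g (join i j y) = g (join i j y') \<or> g (join i k y) = g (join i k y')"
    if "y \<in> {y1, y2, y3, y4}" "y' \<in> {y1, y2, y3, y4}" for y y'
    using that assms(6-9,12-15)
      WTT_row_agreement[OF wtt assms(2-5), of y y'] by blast
  then show False
    using two_rows_four_columns_contradiction[of y1 y2 y3 y4 "\<lambda>y. g (join i j y)"
        "\<lambda>y. g (join i k y)"] assms(10,11) by blast
qed

end
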